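(* Consider the reduced (limit) problem of the repeated wage theft game with fixed strategies and time-converging worker forecasts, as described in the context. If $(a,w_H,w_L,b_H,b_L)$ is feasible for this problem, then $(a,\,w_H-b_H,\,w_L-b_L,\,0,\,0)$ is also feasible and its objective value is at least that of $(a,w_H,w_L,b_H,b_L)$ (weak dominance of the honest strategy of promising $w_i-b_i$ and stealing $0$). The dominance is strict when $a>0$ and $(b_H,b_L)\neq(0,0)$.
   Context: Fix $P>0$, $y_H>y_L\ge0$, a real number $u$ and $\gamma\in(0,1]$. Let $C:[0,1)\to\mathbb{R}$ satisfy $C(0)=0$, increasing, strictly convex, twice differentiable, $C(a)\to\infty$ as $a\to1$; let $\eta:[0,\infty)\to\mathbb{R}$ be strictly convex, increasing, twice differentiable with $\eta(0)=0$. In the repeated wage theft game, in each period $t$ the employer promises wages $w_i^t$ and steals $b_i^t$ ($i\in\{H,L\}$), and the worker, forecasting theft $\hat b_i^t$ from past thefts $b_i^1,\dots,b_i^{t-1}$, chooses effort as if receiving $(w_i^t-\hat b_i^t)^+$. A forecast is time-converging if whenever $b_i^t=b_i$ for all $t\ge t_0$, $\hat b_i^t\to b_i$ as $t\to\infty$. When the employer uses a fixed strategy $(w_H,w_L,b_H,b_L)$ in every period and the worker uses a time-converging forecast, the game reduces to the following problem: choose $a,w_H,w_L,b_H,b_L$ to maximize $a\,(Py_H-w_H+b_H-\gamma\eta(b_H))+(1-a)\,(Py_L-w_L+b_L-\gamma\eta(b_L))$ subject to $a\in\arg\max_{a'\in[0,1)}\{a'(w_H-b_H)+(1-a')(w_L-b_L)-C(a')\}$;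 $a(w_H-b_H)+(1-a)(w_L-b_L)-C(a)\ge u$; $0\le b_L\le w_L$, $0\le b_H\le w_H$; $a\in[0,1)$. *)

theory Defs
  imports "HOL-Analysis.Analysis"
begin

definition strictly_convex_on :: "real set \<Rightarrow> (real \<Rightarrow> real) \<Rightarrow> bool" where
  "strictly_convex_on S f \<longleftrightarrow> convex S \<and>
     (\<forall>x\<in>S. \<forall>y\<in>S. x \<noteq> y \<longrightarrow> (\<forall>t. 0 < t \<and> t < 1 \<longrightarrow>
        f ((1 - t) * x + t * y) < (1 - t) * f x + t * f y))"

definition twice_differentiable_on :: "(real \<Rightarrow> real) \<Rightarrow> real set \<Rightarrow> bool" where
  "twice_differentiable_on f S \<longleftrightarrow> (\<exists>f' f''. \<forall>x\<in>S.
      (f has_real_derivative f' x) (at x within S) \<and>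
      (f' has_real_derivative f'' x) (at x within S))"

definition worker_util :: "(real \<Rightarrow> real) \<Rightarrow> real \<Rightarrow> real \<Rightarrow> real \<Rightarrow> real \<Rightarrow> real \<Rightarrow> real" where
  "worker_util C a' wH wL bH bL = a' * (wH - bH) + (1 - a') * (wL - bL) - C a'"

definition feasible :: "(real \<Rightarrow> real) \<Rightarrow> real \<Rightarrow> real \<Rightarrow> real \<Rightarrow> real \<Rightarrow> real \<Rightarrow> real \<Rightarrow> bool" where
  "feasible C u a wH wL bH bL \<longleftrightarrow>
     a \<in> {0..<1} \<and>
     (\<forall>a'\<in>{0..<1}. worker_util C a' wH wL bH bL \<le> worker_util C a wH wL bH bL) \<and>
     worker_util C a wH wL bH bL \<ge> u \<and>
     0 \<le> bL \<and> bL \<le> wL \<and> 0 \<le> bH \<and> bH \<le> wH"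

definition objective :: "(real \<Rightarrow> real) \<Rightarrow> real \<Rightarrow> real \<Rightarrow> real \<Rightarrow> real \<Rightarrow> real \<Rightarrow> real \<Rightarrow> real \<Rightarrow> real \<Rightarrow> real \<Rightarrow> real" where
  "objective \<eta> P yH yL \<gamma> a wH wL bH bL =
     a * (P * yH - wH + bH - \<gamma> * \<eta> bH) + (1 - a) * (P * yL - wL + bL - \<gamma> * \<eta> bL)"

end

theory Submission
  imports Defs
begin

text \<open>The worker reacts only to the net wages \<open>w\<^sub>i - b\<^sub>i\<close>, so promising \<open>w\<^sub>i - b\<^sub>i\<close> and
  stealing nothing leaves the worker's problem, and hence feasibility of the same effort \<open>a\<close>,
  unchanged. The employer's payoff then changes by exactly the expected theft penalty
  \<open>\<gamma> (a \<eta>(b\<^sub>H) + (1 - a) \<eta>(b\<^sub>L))\<close>, which is nonnegative, and positive as soon as some theft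
  occurs with positive probability, because a monotone strictly convex \<open>\<eta>\<close> is strictly
  increasing and \<open>\<eta>(0) = 0\<close>.\<close>

lemma strictly_convex_mono_on_less:
  assumes mono: "mono_on S f" and convex: "strictly_convex_on S f"
    and "x \<in> S" "y \<in> S" "x < y"
  shows "f x < f y"
proof -
  define m where "m = (x + y) / 2"
  have "m \<in> S"
    using convex \<open>x \<in> S\<close> \<open>y \<in> S\<close> convexD[of S x y "1/2" "1/2"]
    unfolding strictly_convex_on_def m_def by (simp add: add_divide_distrib)
  moreover have "x \<le> m"
    using \<open>x < y\<close> unfolding m_def by simp
  ultimately have "f x \<le> f m"
    using mono_onD[OF mono \<open>x \<in> S\<close>] by simp
  moreover have "2 * f m < f x + f y"
  proof -
    have "\<forall>t. 0 < t \<and> t < 1 \<longrightarrow> f ((1 - t) * x + t * y) < (1 - t) * f x + t * f y"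
      using convex \<open>x \<in> S\<close> \<open>y \<in> S\<close> \<open>x < y\<close> unfolding strictly_convex_on_def by simp
    from spec[OF this, of "1/2"] show ?thesis unfolding m_def by (simp add: field_simps)
  qed
  ultimately show ?thesis by linarith
qed

lemma worker_util_net_wages:
  "worker_util C a' (wH - bH) (wL - bL) 0 0 = worker_util C a' wH wL bH bL"
  by (simp add: worker_util_def)

lemma feasible_net_wages:
  assumes "feasible C u a wH wL bH bL"
  shows "feasible C u a (wH - bH) (wL - bL) 0 0"
  using assms unfolding feasible_def worker_util_net_wages by simp

lemma objective_net_wages_gain:
  assumes "\<eta> 0 = 0"
  shows "objective \<eta> P yH yL \<gamma> a (wH - bH) (wL - bL) 0 0 - objective \<eta> P yH yL \<gamma> a wH wL bH bL
    = \<gamma> * (a * \<eta> bH + (1 - a) * \<eta> bL)"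
  using assms unfolding objective_def by (simp add: algebra_simps)

lemma mono_on_nonneg_at_nonneg:
  fixes \<eta> :: "real \<Rightarrow> real"
  assumes "mono_on {0..} \<eta>" "\<eta> 0 = 0" "0 \<le> b"
  shows "0 \<le> \<eta> b"
  using mono_onD[OF assms(1), of 0 b] assms(2,3) by simp

lemma expected_penalty_nonneg:
  fixes \<eta> :: "real \<Rightarrow> real"
  assumes mono: "mono_on {0..} \<eta>" and "\<eta> 0 = 0"
    and "0 \<le> a" "a \<le> 1" "0 \<le> bH" "0 \<le> bL"
  shows "0 \<le> a * \<eta> bH + (1 - a) * \<eta> bL"
  using assms mono_on_nonneg_at_nonneg[OF mono] by simp

lemma expected_penalty_pos:
  fixes \<eta> :: "real \<Rightarrow> real"
  assumes mono: "mono_on {0..} \<eta>" and convex: "strictly_convex_on {0..} \<eta>" and "\<eta> 0 = 0"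
    and a: "0 < a" "a < 1" and b: "0 \<le> bH" "0 \<le> bL" "(bH, bL) \<noteq> (0, 0)"
  shows "0 < a * \<eta> bH + (1 - a) * \<eta> bL"
proof -
  have pos: "0 < \<eta> b" if "0 < b" for b
    using strictly_convex_mono_on_less[OF mono convex, of 0 b] that \<open>\<eta> 0 = 0\<close> by simp
  have "0 \<le> a * \<eta> bH" "0 \<le> (1 - a) * \<eta> bL"
    using a b mono_on_nonneg_at_nonneg[OF mono \<open>\<eta> 0 = 0\<close>] by simp_all
  moreover have "0 < a * \<eta> bH \<or> 0 < (1 - a) * \<eta> bL"
    using a b pos by (cases "bH = 0") simp_all
  ultimately show ?thesis by linarith
qed

theorem theorem3:
  fixes P yH yL u \<gamma> :: real
    and C \<eta> :: "real \<Rightarrow> real"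
    and a wH wL bH bL :: real
  assumes P_pos: "P > 0"
    and y_order: "yH > yL" and yL_nonneg: "yL \<ge> 0"
    and gamma: "0 < \<gamma>" "\<gamma> \<le> 1"
    and C0: "C 0 = 0"
    and C_mono: "mono_on {0..<1} C"
    and C_convex: "strictly_convex_on {0..<1} C"
    and C_diff: "twice_differentiable_on C {0..<1}"
    and C_lim: "filterlim C at_top (at_left 1)"
    and eta_convex: "strictly_convex_on {0..} \<eta>"
    and eta_mono: "mono_on {0..} \<eta>"
    and eta_diff: "twice_differentiable_on \<eta> {0..}"
    and eta0: "\<eta> 0 = 0"
    and feas: "feasible C u a wH wL bH bL"
  shows "feasible C u a (wH - bH) (wL - bL) 0 0
       \<and> objective \<eta> P yH yL \<gamma> a (wH - bH) (wL - bL) 0 0 \<ge> objective \<eta> P yH yL \<gamma> a wH wL bH bL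
       \<and> (a > 0 \<and> (bH, bL) \<noteq> (0, 0) \<longrightarrow>
            objective \<eta> P yH yL \<gamma> a (wH - bH) (wL - bL) 0 0 > objective \<eta> P yH yL \<gamma> a wH wL bH bL)"
proof -
  have a: "0 \<le> a" "a < 1" and b: "0 \<le> bH" "0 \<le> bL"
    using feas unfolding feasible_def by auto
  have gain: "objective \<eta> P yH yL \<gamma> a (wH - bH) (wL - bL) 0 0 - objective \<eta> P yH yL \<gamma> a wH wL bH bL
      = \<gamma> * (a * \<eta> bH + (1 - a) * \<eta> bL)"
    using eta0 by (rule objective_net_wages_gain)
  show ?thesis
  proof (intro conjI impI)
    show "feasible C u a (wH - bH) (wL - bL) 0 0"
      using feas by (rule feasible_net_wages)
    have "0 \<le> \<gamma> * (a * \<eta> bH + (1 - a) * \<eta> bL)"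
      using expected_penalty_nonneg[OF eta_mono eta0] a b gamma by simp
    then show "objective \<eta> P yH yL \<gamma> a (wH - bH) (wL - bL) 0 0 \<ge> objective \<eta> P yH yL \<gamma> a wH wL bH bL"
      using gain by linarith
  next
    assume "a > 0 \<and> (bH, bL) \<noteq> (0, 0)"
    then have "0 < \<gamma> * (a * \<eta> bH + (1 - a) * \<eta> bL)"
      using expected_penalty_pos[OF eta_mono eta_convex eta0] a b gamma by simp
    then show "objective \<eta> P yH yL \<gamma> a (wH - bH) (wL - bL) 0 0 > objective \<eta> P yH yL \<gamma> a wH wL bH bL"
      using gain by linarith
  qed
qed

end
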